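(* Let $(G,L,v)$ be a reachable triple and $i\in[4]$ a color. Then one of the following holds: (1) $P(G,L,v,i,D)=\frac12$ for all integers $D\ge2$; (2) $P(G,L,v,i,D)\le\frac{13}{27}$ for all integers $D\ge 2$, and specifically $P(G,L,v,i,D)\le\frac{6}{13}$ when $\deg_G(v)\le1$. Furthermore, when $P(G,L,v,i,D)=\frac12$ for some integer $D\ge2$, one of the following three cases occurs: (a) $\deg_G(v)=0$ and $j,w\notin L(v)$ for two distinct colors $j,w$ other than $i$; (b) $\deg_G(v)=1$ and, denoting by $u$ the neighbor of $v$, $i\notin L(u)$ and $j\notin L(u)\cup L(v)$ for some color $j\neq i$; (c) $\deg_G(v)=2$ and, denoting by $u_1,u_2$ the two neighbors of $v$, the vertices $v,u_1,u_2$ form a triangle and $i\notin L(u_1)\cup L(u_2)$.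
   Context: Colors are $[4]=\{1,2,3,4\}$. A list-coloring instance $(G,L)$ is a finite simple graph $G=(V,E)$ with $L:V\to 2^{[4]}$. For a vertex $v$, $G_v$ is $G$ with $v$ and its incident edges removed, and $G_{v,w}=(G_v)_w$. If $v$ has neighbors $v_1,\dots,v_d$ (in a fixed order), then for $k\in[d]$ and a color $j$, $L_{k,j}$ is the list assignment on $G_v$ with $L_{k,j}(v_\ell)=L(v_\ell)\setminus\{j\}$ for $\ell<k$ and $L_{k,j}(u)=L(u)$ for all other vertices $u$ (so $L_{1,j}=L$). A triple $(G,L,v)$ with $v\in V$ is reachable if $\deg_G(u)\le3$ and $|L(u)|\ge\deg_G(u)+1$ for every $u\in V$, and moreover $\deg_G(v)\le2$ and $|L(v)|\ge\deg_G(v)+2$. The procedure $P(G,L,v,i,D)$ ($i\in[4]$, $D$ an integer) is defined recursively (empty products equal $1$): (a) If $i\notin L(v)$, return $0$. Otherwise, if $D\le 0$ or $\deg_G(v)=0$, return $1/|L(v)|$. (b) If $\deg_G(v)=1$ with neighbor $v_1$: let $x=P(G_v,L,v_1,i,D-1)$. If $|L(v)|=2$, say $L(v)=\{i,j\}$, let $y=P(G_v,L,v_1,j,D-1)$ and return $\frac{1-x}{2-x-y}$. If $|L(v)|=4$, return $\frac{1-x}{3}$. If $|L(v)|=3$, let $j$ be the unique color in $[4]\setminus L(v)$, $y=P(G_v,L,v_1,j,D-1)$, and return $\frac{1-x}{2+y}$. (c) If $\deg_G(v)=2$: order its neighbors $v_1,v_2$ so that $\deg_G(v_1)\ge\deg_G(v_2)$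 and, if $\deg_G(v_1)=\deg_G(v_2)=1$, so that $i\notin L(v_1)$ implies $i\notin L(v_2)$. Let $u_1,\dots,u_{d_1}$ be the neighbors of $v_1$ in $G_v$ (fixed order) and for $k\in[d_1]$, $w\in[4]$ let $L'_{k,w}$ be the list assignment on $G_{v,v_1}$ with $L'_{k,w}(u_\ell)=L(u_\ell)\setminus\{w\}$ for $\ell<k$ and $L'_{k,w}(u)=L(u)$ otherwise. Set $x_{k,w}=P(G_{v,v_1},L'_{k,w},u_k,w,D-1)$ for $k\in[d_1]$, $w\in L(v_1)$. For $j\in L(v)$ set $f_j=0$ if $j\notin L(v_1)$ and otherwise $f_j=\frac{\prod_{k=1}^{d_1}(1-x_{k,j})}{\sum_{w\in L(v_1)}\prod_{k=1}^{d_1}(1-x_{k,w})}$, and set $y_j=P(G_v,L_{2,j},v_2,j,D-1)$. Return $\frac{(1-f_i)(1-y_i)}{\sum_{j\in L(v)}(1-f_j)(1-y_j)}$. (d) If $\deg_G(v)=3$ with neighbors $v_1,v_2,v_3$: for $j\in L(v)$ let $x_j=P(G_v,L_{1,j},v_1,j,D-1)$, $y_j=P(G_v,L_{2,j},v_2,j,D-1)$, $z_j=P(G_v,L_{3,j},v_3,j,D-1)$, and return $\frac{(1-x_i)(1-y_i)(1-z_i)}{\sum_{j\in L(v)}(1-x_j)(1-y_j)(1-z_j)}$. For reachable triples, all recursive calls are again on reachable triples and case (d) never occurs. *)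

theory Defs
  imports Complex_Main
begin

definition simple_graph :: "'a set \<Rightarrow> 'a set set \<Rightarrow> bool" where
  "simple_graph V E \<longleftrightarrow> finite V \<and>
     (\<forall>e\<in>E. \<exists>x y. e = {x, y} \<and> x \<noteq> y \<and> x \<in> V \<and> y \<in> V)"

definition nbrs :: "'a set set \<Rightarrow> 'a \<Rightarrow> 'a set" where
  "nbrs E v = {u. {u, v} \<in> E}"

definition deg :: "'a set set \<Rightarrow> 'a \<Rightarrow> nat" where
  "deg E v = card (nbrs E v)"

definition delV :: "'a set \<Rightarrow> 'a \<Rightarrow> 'a set" where
  "delV V v = V - {v}"

definition delE :: "'a set set \<Rightarrow> 'a \<Rightarrow> 'a set set" where
  "delE E v = {e \<in> E. v \<notin> e}"

abbreviation colors :: "nat set" where "colors \<equiv> {1..4}"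

text \<open>A neighbour-ordering: for each graph, list assignment and vertex, a list
  enumerating the neighbours without repetition (the "fixed order").\<close>
definition valid_ord :: "('a set \<Rightarrow> 'a set set \<Rightarrow> ('a \<Rightarrow> nat set) \<Rightarrow> 'a \<Rightarrow> 'a list) \<Rightarrow> bool" where
  "valid_ord ord \<longleftrightarrow> (\<forall>V E L v. simple_graph V E \<longrightarrow>
      distinct (ord V E L v) \<and> set (ord V E L v) = nbrs E v)"

text \<open>Lupd L us w k: remove colour w from the lists of the first k vertices of us
  (i.e. the list assignment L_{k+1,w} of the paper, 0-indexed).\<close>
definition Lupd :: "('a \<Rightarrow> nat set) \<Rightarrow> 'a list \<Rightarrow> nat \<Rightarrow> nat \<Rightarrow> ('a \<Rightarrow> nat set)" where
  "Lupd L us w k = (\<lambda>u. if u \<in> set (take k us) then L u - {w} else L u)"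

definition ok_order :: "'a set set \<Rightarrow> ('a \<Rightarrow> nat set) \<Rightarrow> nat \<Rightarrow> 'a \<Rightarrow> 'a \<Rightarrow> bool" where
  "ok_order E L i a b \<longleftrightarrow> deg E a \<ge> deg E b \<and>
     (deg E a = 1 \<and> deg E b = 1 \<longrightarrow> (i \<notin> L a \<longrightarrow> i \<notin> L b))"

fun Pf :: "('a set \<Rightarrow> 'a set set \<Rightarrow> ('a \<Rightarrow> nat set) \<Rightarrow> 'a \<Rightarrow> 'a list) \<Rightarrow> nat \<Rightarrow>
           'a set \<Rightarrow> 'a set set \<Rightarrow> ('a \<Rightarrow> nat set) \<Rightarrow> 'a \<Rightarrow> nat \<Rightarrow> real" where
  "Pf ord 0 V E L v i = (if i \<notin> L v then 0 else 1 / real (card (L v)))"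
| "Pf ord (Suc n) V E L v i =
    (if i \<notin> L v then 0
     else (let ns = ord V E L v; V' = delV V v; E' = delE E v in
      if deg E v = 0 then 1 / real (card (L v))
      else if deg E v = 1 then
        (let v1 = ns ! 0; x = Pf ord n V' E' L v1 i in
         if card (L v) = 2 then
           (let j = the_elem (L v - {i}); y = Pf ord n V' E' L v1 j in (1 - x) / (2 - x - y))
         else if card (L v) = 4 then (1 - x) / 3
         else if card (L v) = 3 then
           (let j = the_elem (colors - L v); y = Pf ord n V' E' L v1 j in (1 - x) / (2 + y))
         else 0)
      else if deg E v = 2 then
        (let a = ns ! 0; b = ns ! 1;
             v1 = (if ok_order E L i a b then a else b);
             v2 = (if ok_order E L i a b then b else a);
             us = ord V' E' L v1;
             V'' = delV V' v1; E'' = delE E' v1;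
             pr = (\<lambda>w. \<Prod>k<length us. (1 - Pf ord n V'' E'' (Lupd L us w k) (us ! k) w));
             f = (\<lambda>j. if j \<notin> L v1 then 0 else pr j / (\<Sum>w\<in>L v1. pr w));
             y = (\<lambda>j. Pf ord n V' E' (Lupd L [v1, v2] j 1) v2 j)
         in (1 - f i) * (1 - y i) / (\<Sum>j\<in>L v. (1 - f j) * (1 - y j)))
      else if deg E v = 3 then
        (let x = (\<lambda>j. Pf ord n V' E' (Lupd L ns j 0) (ns ! 0) j);
             y = (\<lambda>j. Pf ord n V' E' (Lupd L ns j 1) (ns ! 1) j);
             z = (\<lambda>j. Pf ord n V' E' (Lupd L ns j 2) (ns ! 2) j)
         in (1 - x i) * (1 - y i) * (1 - z i) /
            (\<Sum>j\<in>L v. (1 - x j) * (1 - y j) * (1 - z j)))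
      else 0))"

text \<open>P(G,L,v,i,D) for integer D (D \<le> 0 means fuel 0).\<close>
definition P :: "('a set \<Rightarrow> 'a set set \<Rightarrow> ('a \<Rightarrow> nat set) \<Rightarrow> 'a \<Rightarrow> 'a list) \<Rightarrow>
           'a set \<Rightarrow> 'a set set \<Rightarrow> ('a \<Rightarrow> nat set) \<Rightarrow> 'a \<Rightarrow> nat \<Rightarrow> int \<Rightarrow> real" where
  "P ord V E L v i D = Pf ord (nat D) V E L v i"

definition reachable :: "'a set \<Rightarrow> 'a set set \<Rightarrow> ('a \<Rightarrow> nat set) \<Rightarrow> 'a \<Rightarrow> bool" where
  "reachable V E L v \<longleftrightarrow> simple_graph V E \<and> v \<in> V \<and>
     (\<forall>u\<in>V. L u \<subseteq> colors \<and> deg E u \<le> 3 \<and> card (L u) \<ge> deg E u + 1) \<and>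
     deg E v \<le> 2 \<and> card (L v) \<ge> deg E v + 2"

end

theory Submission
  imports Defs
begin

text \<open>By induction on the depth, every value of the procedure on a reachable triple lies in
  \<open>[0, 1/2]\<close> and, when \<open>i \<in> L v\<close>, is at least \<open>1/14\<close> (at least \<open>1/6\<close> if \<open>deg v \<le> 1\<close>).
  For \<open>deg v = 0\<close> the value is \<open>1/|L v|\<close>. For \<open>deg v = 1\<close> it is \<open>(1 - x)/3\<close> or \<open>(1 - x)/(2 + y)\<close>
  with child values \<open>x, y\<close>; it equals \<open>1/2\<close> exactly when \<open>x = y = 0\<close>, i.e. both colours are
  missing at the neighbour, and otherwise the lower bounds on \<open>x\<close> or \<open>y\<close> give \<open>6/13\<close>.
  For \<open>deg v = 2\<close> it is \<open>(1 - f\<^sub>i)(1 - y\<^sub>i) / \<Sum>\<^sub>j (1 - f\<^sub>j)(1 - y\<^sub>j)\<close> with \<open>\<Sum>\<^sub>j f\<^sub>j = 1\<close> and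
  \<open>y\<^sub>j \<le> 1/2\<close>, hence at most \<open>1/2\<close>, and equality forces \<open>f\<^sub>i = y\<^sub>i = 0\<close> and \<open>y\<^sub>j = 1/2\<close> for
  \<open>j \<noteq> i\<close>. This happens on a triangle whose two other vertices miss \<open>i\<close>. Otherwise
  \<open>f\<^sub>i \<ge> 1/16\<close>, or \<open>y\<^sub>i \<ge> 1/14\<close>, or the \<open>y\<^sub>j\<close> with \<open>j \<noteq> i\<close> fall short of \<open>1/2\<close> by \<open>2/13\<close> in
  total, and each of these gives the bound \<open>13/27\<close>.\<close>

section \<open>Arithmetic\<close>

lemma normalized_weight_bounds:
  fixes p :: "'b \<Rightarrow> real"
  assumes A: "finite A" "j \<in> A" and p: "\<And>w. w \<in> A \<Longrightarrow> a \<le> p w \<and> p w \<le> 1" and a: "0 < a"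
  shows "a / real (card A) \<le> p j / (\<Sum>w\<in>A. p w)"
    and "p j / (\<Sum>w\<in>A. p w) \<le> 1 / (1 + (real (card A) - 1) * a)"
proof -
  have pos: "0 < card A" using A by (auto simp: card_gt_0_iff)
  then have card: "1 \<le> real (card A)" by simp
  have rest: "(real (card A) - 1) * a \<le> (\<Sum>w\<in>A - {j}. p w)"
    using sum_mono[of "A - {j}" "\<lambda>_. a" p] p A pos by (simp add: card_Diff_singleton of_nat_diff)
  have split: "(\<Sum>w\<in>A. p w) = p j + (\<Sum>w\<in>A - {j}. p w)" using A by (simp add: sum.remove)
  have tot: "real (card A) * a \<le> (\<Sum>w\<in>A. p w)" "(\<Sum>w\<in>A. p w) \<le> real (card A)"
    using sum_mono[of A "\<lambda>_. a" p] sum_mono[of A p "\<lambda>_. 1"] p by auto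
  have "0 < real (card A) * a" using pos a by simp
  with tot(1) have sum_pos: "0 < (\<Sum>w\<in>A. p w)" by linarith
  have pj: "a \<le> p j" "p j \<le> 1" using p A by auto
  show "a / real (card A) \<le> p j / (\<Sum>w\<in>A. p w)"
    using tot(2) sum_pos pj a by (intro frac_le) auto
  have "p j * (1 + (real (card A) - 1) * a) \<le> p j + (\<Sum>w\<in>A - {j}. p w)"
    using rest pj a card mult_left_le[of "p j" "(real (card A) - 1) * a"] by (simp add: algebra_simps)
  then show "p j / (\<Sum>w\<in>A. p w) \<le> 1 / (1 + (real (card A) - 1) * a)"
    using split sum_pos card a by (simp add: divide_simps add_pos_nonneg)
qed

lemma sum_normalized_weights:
  fixes p :: "'b \<Rightarrow> real"
  assumes "finite C" "A \<subseteq> C" "0 < (\<Sum>w\<in>A. p w)"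
  shows "(\<Sum>j\<in>C. if j \<notin> A then 0 else p j / (\<Sum>w\<in>A. p w)) = 1"
proof -
  have "(\<Sum>j\<in>C. if j \<notin> A then 0 else p j / (\<Sum>w\<in>A. p w)) = (\<Sum>j\<in>A. p j / (\<Sum>w\<in>A. p w))"
    using assms(1,2) by (intro sum.mono_neutral_cong_right) auto
  also have "\<dots> = 1" using assms(3) by (simp add: sum_divide_distrib[symmetric])
  finally show ?thesis .
qed

definition weighted_ratio :: "nat set \<Rightarrow> (nat \<Rightarrow> real) \<Rightarrow> (nat \<Rightarrow> real) \<Rightarrow> nat \<Rightarrow> real" where
  "weighted_ratio C f y i = (1 - f i) * (1 - y i) / (\<Sum>j\<in>C. (1 - f j) * (1 - y j))"

context
  fixes C :: "nat set" and f y :: "nat \<Rightarrow> real" and i :: nat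
  assumes C: "finite C" "card C = 4" "i \<in> C"
    and f: "\<And>j. j \<in> C \<Longrightarrow> 0 \<le> f j \<and> f j \<le> 1" and sum_f: "(\<Sum>j\<in>C. f j) = 1"
    and y: "\<And>j. j \<in> C \<Longrightarrow> 0 \<le> y j \<and> y j \<le> 1/2"
begin

lemma weighted_ratio_split:
  "weighted_ratio C f y i = (1 - f i) * (1 - y i) / ((1 - f i) * (1 - y i) + (\<Sum>j\<in>C - {i}. (1 - f j) * (1 - y j)))"
  unfolding weighted_ratio_def using C by (simp add: sum.remove)

lemma weighted_ratio_rest_ge: "(2 + f i) / 2 \<le> (\<Sum>j\<in>C - {i}. (1 - f j) * (1 - y j))"
proof -
  have "(\<Sum>j\<in>C - {i}. f j) = 1 - f i" using sum_f C by (simp add: sum.remove)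
  then have "(3 - (1 - f i)) / 2 = (\<Sum>j\<in>C - {i}. (1 - f j) / 2)"
    using C by (simp add: sum_divide_distrib[symmetric] sum_subtractf)
  also have "\<dots> \<le> (\<Sum>j\<in>C - {i}. (1 - f j) * (1 - y j))"
  proof (rule sum_mono)
    fix j assume "j \<in> C - {i}"
    then show "(1 - f j) / 2 \<le> (1 - f j) * (1 - y j)"
      using mult_left_mono[of "1/2" "1 - y j" "1 - f j"] f y by simp
  qed
  finally show ?thesis by simp
qed

lemma weighted_ratio_range: "0 \<le> weighted_ratio C f y i \<and> weighted_ratio C f y i \<le> 1/2"
proof -
  have fi: "0 \<le> f i" "f i \<le> 1" and "0 \<le> y i" "y i \<le> 1/2" using f y C by auto
  then have "0 \<le> (1 - f i) * (1 - y i)" "(1 - f i) * (1 - y i) \<le> 1" by (auto intro: mult_le_one)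
  with weighted_ratio_rest_ge fi show ?thesis
    unfolding weighted_ratio_split by (simp add: divide_simps)
qed

lemma weighted_ratio_ge: "f i \<le> 4/7 \<Longrightarrow> 1/14 \<le> weighted_ratio C f y i"
proof -
  assume "f i \<le> 4/7"
  then have A: "3/7 * (1/2) \<le> (1 - f i) * (1 - y i)" using y C by (intro mult_mono) auto
  have "(\<Sum>j\<in>C. (1 - f j) * (1 - y j)) \<le> (\<Sum>j\<in>C. 1 - f j)"
    using f y by (intro sum_mono mult_left_le) auto
  also have "\<dots> = 3" using C sum_f by (simp add: sum_subtractf)
  finally have "(1 - f i) * (1 - y i) + (\<Sum>j\<in>C - {i}. (1 - f j) * (1 - y j)) \<le> 3"
    using C by (simp add: sum.remove)
  with A weighted_ratio_rest_ge f[OF C(3)] show ?thesis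
    unfolding weighted_ratio_split by (simp add: le_divide_eq)
qed

lemma weighted_ratio_le_13_27: "1/16 \<le> f i \<or> 1/14 \<le> y i \<Longrightarrow> weighted_ratio C f y i \<le> 13/27"
proof -
  assume alt: "1/16 \<le> f i \<or> 1/14 \<le> y i"
  define A where "A = (1 - f i) * (1 - y i)"
  have fi: "0 \<le> f i" "f i \<le> 1" and yi: "0 \<le> y i" "y i \<le> 1/2" using f y C by auto
  have "28 * A \<le> 13 * (2 + f i)"
    using alt
  proof
    assume "1/16 \<le> f i"
    moreover have "A \<le> 1 - f i" unfolding A_def using fi yi by (intro mult_left_le) auto
    ultimately show ?thesis by simp
  next
    assume "1/14 \<le> y i"
    then have "A \<le> (1 - f i) * (13/14)" unfolding A_def using fi by (intro mult_left_mono) auto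
    then show ?thesis using fi by simp
  qed
  moreover have "0 \<le> A" unfolding A_def using fi yi by simp
  ultimately show ?thesis
    unfolding weighted_ratio_split A_def[symmetric] using weighted_ratio_rest_ge fi by (simp add: divide_simps)
qed

lemma weighted_ratio_le_13_27_slack:
  assumes fi: "f i = 0" and yi: "y i = 0" and f_half: "\<And>j. j \<in> C \<Longrightarrow> f j \<le> 1/2"
    and slack: "2/13 \<le> (\<Sum>j\<in>C - {i}. 1/2 - y j)"
  shows "weighted_ratio C f y i \<le> 13/27"
proof -
  have "(1 - f j) / 2 + (1/2) * (1/2 - y j) \<le> (1 - f j) * (1 - y j)" if "j \<in> C" for j
  proof -
    have "(1/2) * (1/2 - y j) \<le> (1 - f j) * (1/2 - y j)"
      using f_half[OF that] y[OF that] by (intro mult_right_mono) auto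
    moreover have "(1 - f j) * (1 - y j) = (1 - f j) / 2 + (1 - f j) * (1/2 - y j)"
      by (simp add: algebra_simps)
    ultimately show ?thesis by linarith
  qed
  then have "(\<Sum>j\<in>C - {i}. (1 - f j) / 2 + (1/2) * (1/2 - y j)) \<le> (\<Sum>j\<in>C - {i}. (1 - f j) * (1 - y j))"
    by (intro sum_mono) auto
  moreover have "(\<Sum>j\<in>C - {i}. (1 - f j) / 2 + (1/2) * (1/2 - y j)) =
      (\<Sum>j\<in>C - {i}. 1 - f j) / 2 + (1/2) * (\<Sum>j\<in>C - {i}. 1/2 - y j)"
    by (simp add: sum.distrib sum_divide_distrib sum_distrib_left)
  moreover have "(\<Sum>j\<in>C - {i}. 1 - f j) = 2"
    using C sum_f fi by (simp add: sum_subtractf sum.remove)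
  ultimately have "14/13 \<le> (\<Sum>j\<in>C - {i}. (1 - f j) * (1 - y j))" using slack by linarith
  then show ?thesis unfolding weighted_ratio_split fi yi by (simp add: divide_simps)
qed

end

lemma min_weight_spread_ge:
  fixes c :: real
  assumes "1 \<le> d" "d \<le> 3" "real d + 1 \<le> c"
  shows "3/4 \<le> (c - 1) * (1/2) ^ (d - 1)" and "d \<le> 2 \<Longrightarrow> 1 \<le> (c - 1) * (1/2) ^ (d - 1)"
proof -
  have "d = 1 \<or> d = 2 \<or> d = 3" using assms(1,2) by auto
  then show "3/4 \<le> (c - 1) * (1/2) ^ (d - 1)" "d \<le> 2 \<Longrightarrow> 1 \<le> (c - 1) * (1/2) ^ (d - 1)"
    using assms(3) by (auto simp: power2_eq_square)
qed

lemma deg1_ratio_bounds: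
  fixes x y :: real
  assumes "0 \<le> x" "x \<le> 1/2" "0 \<le> y" "y \<le> 1/2"
  shows "1/5 \<le> (1 - x) / (2 + y)" "(1 - x) / (2 + y) \<le> 1/2"
  using assms by (simp_all add: divide_simps)

lemma slack_term_mono:
  fixes x z X Z :: real
  assumes "x \<le> X" "X \<le> 1" "0 \<le> z" "z \<le> Z"
  shows "1/2 - (1 - x) / (2 + z) \<le> 1/2 - (1 - X) / (2 + Z)"
  using assms by (simp add: frac_le)

lemma slack_of_lower_1_14:
  fixes X Z :: "nat \<Rightarrow> real"
  assumes i: "i \<in> colors" and XZ: "\<And>j. j \<in> colors - {i} \<Longrightarrow> 1/14 \<le> X j \<and> X j \<le> 1 \<and> 1/14 \<le> Z j"
  shows "2/13 \<le> (\<Sum>j\<in>colors - {i}. 1/2 - (1 - X j) / (2 + Z j))"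
proof -
  have "(\<Sum>j\<in>colors - {i}. 3/58) \<le> (\<Sum>j\<in>colors - {i}. 1/2 - (1 - X j) / (2 + Z j))"
  proof (rule sum_mono)
    fix j assume "j \<in> colors - {i}"
    then show "3/58 \<le> 1/2 - (1 - X j) / (2 + Z j)"
      using slack_term_mono[of "1/14" "X j" "1/14" "Z j"] XZ by simp
  qed
  then show ?thesis using i by simp
qed

lemma slack_of_lower_1_6:
  fixes X Z :: "nat \<Rightarrow> real"
  assumes i: "i \<in> colors" and A: "A \<subseteq> colors" "2 \<le> card A"
    and XZ: "\<And>j. j \<in> colors - {i} \<Longrightarrow> 0 \<le> X j \<and> X j \<le> 1 \<and> 0 \<le> Z j \<and>
      (j \<in> A \<longrightarrow> 1/6 \<le> X j) \<and> (i \<in> A \<longrightarrow> 1/6 \<le> Z j)"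
  shows "2/13 \<le> (\<Sum>j\<in>colors - {i}. 1/2 - (1 - X j) / (2 + Z j))"
proof -
  define b where "b j = of_bool (j \<in> A) / 13 + of_bool (i \<in> A) / (26::real)" for j
  have "(\<Sum>j\<in>colors - {i}. b j) \<le> (\<Sum>j\<in>colors - {i}. 1/2 - (1 - X j) / (2 + Z j))"
  proof (rule sum_mono)
    fix j assume j: "j \<in> colors - {i}"
    define x :: real where "x = (if j \<in> A then 1/6 else 0)"
    define z :: real where "z = (if i \<in> A then 1/6 else 0)"
    have "b j \<le> 1/2 - (1 - x) / (2 + z)"
      by (cases "j \<in> A"; cases "i \<in> A") (simp_all add: b_def x_def z_def)
    also have "\<dots> \<le> 1/2 - (1 - X j) / (2 + Z j)"
      using XZ[OF j] by (intro slack_term_mono) (auto simp: x_def z_def)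
    finally show "b j \<le> 1/2 - (1 - X j) / (2 + Z j)" .
  qed
  moreover have "(\<Sum>j\<in>colors - {i}. b j) = real (card (A - {i})) / 13 + 3 * of_bool (i \<in> A) / 26"
  proof -
    have "(colors - {i}) \<inter> {j. j \<in> A} = A - {i}" using A(1) by auto
    then show ?thesis using i by (simp add: b_def sum.distrib sum_divide_distrib[symmetric])
  qed
  moreover have "real (card (A - {i})) = real (card A) - of_bool (i \<in> A)"
    using A finite_subset[OF A(1)] by (auto simp: card_Diff_singleton_if of_nat_diff)
  moreover have "2/13 \<le> (real (card A) - of_bool (i \<in> A)) / 13 + 3 * of_bool (i \<in> A) / 26"
    using A(2) by (cases "i \<in> A") (simp_all add: field_simps)
  ultimately show ?thesis by (smt (verit))
qed

lemma card_le_4: "A \<subseteq> colors \<Longrightarrow> card A \<le> 4"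
  using card_mono[of colors A] by simp

lemma eq_colors_if_card: "A \<subseteq> colors \<Longrightarrow> 4 \<le> card A \<Longrightarrow> A = colors"
  by (simp add: card_subset_eq finite_subset le_antisym card_le_4)

lemma eq_colors_minus_if_card:
  "A \<subseteq> colors \<Longrightarrow> j \<notin> A \<Longrightarrow> j \<in> colors \<Longrightarrow> 3 \<le> card A \<Longrightarrow> A = colors - {j}"
proof (rule card_subset_eq)
  assume "A \<subseteq> colors" "j \<notin> A" "j \<in> colors" "3 \<le> card A"
  moreover from this have "card A \<le> card (colors - {j})" by (intro card_mono) auto
  ultimately show "card A = card (colors - {j})" by simp
qed auto

lemma colors_minus_singleton_if_card3:
  assumes "A \<subseteq> colors" "card A = 3"
  obtains j where "j \<in> colors" "A = colors - {j}"
proof -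
  have "card (colors - A) = 1" using assms by (simp add: card_Diff_subset finite_subset)
  then obtain j where j: "colors - A = {j}" by (meson card_1_singletonE)
  then have "A = colors - {j}" using assms(1) by auto
  with j show ?thesis by (intro that) auto
qed

lemma nbr_in_V:
  assumes "simple_graph V E" "u \<in> nbrs E x"
  shows "u \<in> V" "x \<in> V" "u \<noteq> x"
proof -
  from assms(2) have "{u, x} \<in> E" by (simp add: nbrs_def)
  with assms(1) obtain a b where "{u, x} = {a, b}" "a \<noteq> b" "a \<in> V" "b \<in> V"
    unfolding simple_graph_def by blast
  then show "u \<in> V" "x \<in> V" "u \<noteq> x" by (auto simp: doubleton_eq_iff)
qed

lemma nbrs_sym: "u \<in> nbrs E x \<longleftrightarrow> x \<in> nbrs E u"
  by (simp add: nbrs_def insert_commute)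

lemma finite_nbrs: "simple_graph V E \<Longrightarrow> finite (nbrs E x)"
  by (meson finite_subset nbr_in_V(1) simple_graph_def subsetI)

lemma nbrs_delE: "u \<noteq> v \<Longrightarrow> nbrs (delE E v) u = nbrs E u - {v}"
  by (auto simp: nbrs_def delE_def)

lemma simple_graph_del: "simple_graph V E \<Longrightarrow> simple_graph (delV V v) (delE E v)"
  unfolding simple_graph_def delV_def delE_def by blast

lemma deg_delE:
  assumes "simple_graph V E" "u \<noteq> v"
  shows "deg (delE E v) u = (if v \<in> nbrs E u then deg E u - 1 else deg E u)"
  using assms by (simp add: deg_def nbrs_delE card_Diff_singleton finite_nbrs)

lemma deg_pos: "simple_graph V E \<Longrightarrow> v \<in> nbrs E u \<Longrightarrow> 1 \<le> deg E u"
  unfolding deg_def by (metis One_nat_def Suc_leI card_gt_0_iff empty_iff finite_nbrs)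

lemma deg_eq_1_iff: "simple_graph V E \<Longrightarrow> deg E v = 1 \<longleftrightarrow> (\<exists>u. nbrs E v = {u})"
  by (simp add: deg_def card_1_singleton_iff)

lemma valid_ordD:
  assumes "valid_ord ord" "simple_graph V E"
  shows "distinct (ord V E L v)" "set (ord V E L v) = nbrs E v" "length (ord V E L v) = deg E v"
  using assms unfolding valid_ord_def deg_def by (metis distinct_card)+

lemma ord_single:
  assumes "valid_ord ord" "simple_graph V E" "nbrs E v = {u}"
  shows "ord V E L v = [u]"
proof -
  have d: "distinct (ord V E L v)" and s: "set (ord V E L v) = {u}"
    using valid_ordD[OF assms(1,2), of L v] assms(3) by auto
  from distinct_card[OF d] s have "length (ord V E L v) = 1" by simp
  then obtain x where "ord V E L v = [x]" by (auto simp: length_Suc_conv)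
  with s show ?thesis by simp
qed

lemma ord_pair:
  assumes "valid_ord ord" "simple_graph V E" "deg E v = 2"
  shows "nbrs E v = {ord V E L v ! 0, ord V E L v ! 1}" "ord V E L v ! 0 \<noteq> ord V E L v ! 1"
proof -
  have "distinct (ord V E L v)" "set (ord V E L v) = nbrs E v" "length (ord V E L v) = 2"
    using valid_ordD[OF assms(1,2)] assms(3) by auto
  moreover from \<open>length (ord V E L v) = 2\<close> obtain a b where "ord V E L v = [a, b]"
    by (auto simp: length_Suc_conv numeral_2_eq_2)
  ultimately show "nbrs E v = {ord V E L v ! 0, ord V E L v ! 1}" "ord V E L v ! 0 \<noteq> ord V E L v ! 1"
    by auto
qed

section \<open>Reachable subinstances\<close>

definition admissible :: "'a set \<Rightarrow> 'a set set \<Rightarrow> ('a \<Rightarrow> nat set) \<Rightarrow> bool" where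
  "admissible V E L \<longleftrightarrow> simple_graph V E \<and>
     (\<forall>u\<in>V. L u \<subseteq> colors \<and> deg E u \<le> 3 \<and> deg E u + 1 \<le> card (L u))"

lemma reachable_iff:
  "reachable V E L v \<longleftrightarrow> admissible V E L \<and> v \<in> V \<and> deg E v \<le> 2 \<and> deg E v + 2 \<le> card (L v)"
  unfolding reachable_def admissible_def by auto

lemma admissible_simple_graph: "admissible V E L \<Longrightarrow> simple_graph V E"
  by (simp add: admissible_def)

lemma admissible_finite: "admissible V E L \<Longrightarrow> u \<in> V \<Longrightarrow> finite (L u)"
  unfolding admissible_def by (meson finite_atLeastAtMost finite_subset)

lemma admissible_deg_le_2:
  assumes adm: "admissible V E L" and u: "u \<in> V" and i: "i \<notin> L u" "i \<in> colors"
  shows "deg E u \<le> 2"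
proof -
  have "L u \<subseteq> colors - {i}" "deg E u + 1 \<le> card (L u)" using adm u i by (auto simp: admissible_def)
  moreover have "card (colors - {i}) = 3" using i(2) by simp
  ultimately show ?thesis using card_mono[of "colors - {i}" "L u"] by simp
qed

lemma admissible_delete:
  assumes adm: "admissible V E L"
    and L': "\<And>u. u \<in> V \<Longrightarrow> u \<noteq> v \<Longrightarrow>
      L' u \<subseteq> L u \<and> card (L u) \<le> card (L' u) + (if u \<in> nbrs E v then 1 else 0)"
  shows "admissible (delV V v) (delE E v) L'"
  unfolding admissible_def
proof (intro conjI ballI)
  have sg: "simple_graph V E" using adm by (rule admissible_simple_graph)
  then show "simple_graph (delV V v) (delE E v)" by (rule simple_graph_del)
  fix u assume "u \<in> delV V v"
  then have u: "u \<in> V" "u \<noteq> v" by (auto simp: delV_def)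
  have "L u \<subseteq> colors" "deg E u \<le> 3" "deg E u + 1 \<le> card (L u)"
    using adm u(1) by (auto simp: admissible_def)
  moreover have "1 \<le> deg E u" if "u \<in> nbrs E v"
    using deg_pos[OF sg] that by (simp add: nbrs_sym)
  ultimately show "L' u \<subseteq> colors" "deg (delE E v) u \<le> 3" "deg (delE E v) u + 1 \<le> card (L' u)"
    using L'[OF u] deg_delE[OF sg u(2)] by (auto simp: nbrs_sym split: if_splits)
qed

lemma admissible_delete_vertex: "admissible V E L \<Longrightarrow> admissible (delV V v) (delE E v) L"
  by (rule admissible_delete) auto

lemma Lupd_0 [simp]: "Lupd L us w 0 = L"
  by (simp add: Lupd_def)

text \<open>Every recursive call of the procedure is on a triple of this form, hence reachable.\<close>
lemma reachable_Lupd: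
  assumes adm: "admissible V E L" and us: "distinct us" "set us \<subseteq> nbrs E x" and k: "k < length us"
  shows "reachable (delV V x) (delE E x) (Lupd L us w k) (us ! k)"
proof -
  have sg: "simple_graph V E" using adm by (rule admissible_simple_graph)
  have adm': "admissible (delV V x) (delE E x) (Lupd L us w k)"
  proof (rule admissible_delete[OF adm])
    fix u assume "u \<in> V" "u \<noteq> x"
    then have "finite (L u)" using admissible_finite[OF adm] by blast
    moreover have "u \<in> nbrs E x" if "u \<in> set (take k us)"
      using us(2) that in_set_takeD by fastforce
    ultimately show "Lupd L us w k u \<subseteq> L u \<and>
        card (L u) \<le> card (Lupd L us w k u) + (if u \<in> nbrs E x then 1 else 0)"
      by (auto simp: Lupd_def card_Diff_singleton_if)
  qed
  have uk: "us ! k \<in> nbrs E x" using us(2) k nth_mem by blast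
  note u = nbr_in_V[OF sg uk]
  have "us ! k \<notin> set (take k us)"
    using us(1) k by (simp add: distinct_conv_nth in_set_conv_nth)
  then have "Lupd L us w k (us ! k) = L (us ! k)" by (simp add: Lupd_def)
  moreover have xu: "x \<in> nbrs E (us ! k)" using uk by (simp add: nbrs_sym)
  moreover have "1 \<le> deg E (us ! k)" using deg_pos[OF sg xu] .
  moreover have "deg E (us ! k) \<le> 3" "deg E (us ! k) + 1 \<le> card (L (us ! k))"
    using adm u(1) by (auto simp: admissible_def)
  ultimately show ?thesis
    unfolding reachable_iff using adm' u deg_delE[OF sg u(3)]
    by (auto simp: delV_def)
qed

lemma reachable_nbr:
  "admissible V E L \<Longrightarrow> u \<in> nbrs E x \<Longrightarrow> reachable (delV V x) (delE E x) L u"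
  using reachable_Lupd[of V E L "[u]" x 0] by simp

lemma Lupd_pair_second: "v1 \<noteq> v2 \<Longrightarrow> Lupd L [v1, v2] j 1 v2 = L v2"
  by (simp add: Lupd_def)

lemma second_nbr_reachable:
  "admissible V E L \<Longrightarrow> nbrs E v = {v1, v2} \<Longrightarrow> v1 \<noteq> v2 \<Longrightarrow>
    reachable (delV V v) (delE E v) (Lupd L [v1, v2] j 1) v2"
  using reachable_Lupd[of V E L "[v1, v2]" v 1 j] by simp

section \<open>Unfolding the recursion\<close>

text \<open>Unfolding \<open>Pf\<close> at a successor depth produces a huge term, so it is done only through the
  lemmas of this section.\<close>
declare Pf.simps(2) [simp del]

lemma Pf_notin: "i \<notin> L v \<Longrightarrow> Pf ord n V E L v i = 0"
  by (cases n) (auto simp: Pf.simps)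

lemma Pf_deg0: "deg E v = 0 \<Longrightarrow> Pf ord n V E L v i = (if i \<in> L v then 1 / real (card (L v)) else 0)"
  by (cases n) (auto simp: Pf.simps)

lemma Pf_deg1_card4:
  assumes "valid_ord ord" "simple_graph V E" "nbrs E v = {u}" "i \<in> L v" "card (L v) = 4"
  shows "Pf ord (Suc n) V E L v i = (1 - Pf ord n (delV V v) (delE E v) L u i) / 3"
proof -
  have d: "deg E v = 1" using assms(3) by (simp add: deg_def)
  have o: "ord V E L v ! 0 = u" using ord_single[OF assms(1-3)] by simp
  show ?thesis using d o assms(4,5) by (simp add: Pf.simps Let_def)
qed

lemma Pf_deg1_card3:
  assumes "valid_ord ord" "simple_graph V E" "nbrs E v = {u}"
    and "L v = colors - {j}" "j \<in> colors" "i \<noteq> j" "i \<in> colors"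
  shows "Pf ord (Suc n) V E L v i =
    (1 - Pf ord n (delV V v) (delE E v) L u i) / (2 + Pf ord n (delV V v) (delE E v) L u j)"
proof -
  have d: "deg E v = 1" using assms(3) by (simp add: deg_def)
  have o: "ord V E L v ! 0 = u" using ord_single[OF assms(1-3)] by simp
  have "colors - L v = {j}" "card (L v) = 3" "i \<in> L v"
    unfolding assms(4) using assms(5-7) by auto
  then show ?thesis using d o by (simp add: Pf.simps Let_def)
qed

lemma Pf_deg1_cases [consumes 4]:
  assumes vo: "valid_ord ord" and R: "reachable V E L v" and d: "deg E v = 1" and iL: "i \<in> L v"
  obtains (card4) u where "nbrs E v = {u}" "reachable (delV V v) (delE E v) L u"
      "Pf ord (Suc n) V E L v i = (1 - Pf ord n (delV V v) (delE E v) L u i) / 3"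
  | (card3) u j where "nbrs E v = {u}" "reachable (delV V v) (delE E v) L u"
      "L v = colors - {j}" "j \<in> colors" "i \<noteq> j"
      "Pf ord (Suc n) V E L v i =
        (1 - Pf ord n (delV V v) (delE E v) L u i) / (2 + Pf ord n (delV V v) (delE E v) L u j)"
proof -
  have adm: "admissible V E L" and Lv: "L v \<subseteq> colors" "3 \<le> card (L v)"
    using R d by (auto simp: reachable_iff admissible_def)
  have sg: "simple_graph V E" using adm by (rule admissible_simple_graph)
  obtain u where u: "nbrs E v = {u}" using deg_eq_1_iff[OF sg] d by blast
  then have Ru: "reachable (delV V v) (delE E v) L u" using reachable_nbr[OF adm] by simp
  have "card (L v) \<le> 4" using card_le_4[OF Lv(1)] .
  with Lv(2) have "card (L v) = 4 \<or> card (L v) = 3" by linarith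
  then show ?thesis
  proof
    assume "card (L v) = 4"
    then show ?thesis using Pf_deg1_card4[where L=L and v=v, OF vo sg u iL] u Ru card4 by blast
  next
    assume "card (L v) = 3"
    then obtain j where j: "j \<in> colors" "L v = colors - {j}"
      using Lv(1) colors_minus_singleton_if_card3 by blast
    with iL have "i \<noteq> j" "i \<in> colors" by auto
    then show ?thesis using Pf_deg1_card3[where L=L and v=v, OF vo sg u j(2,1)] u Ru j card3 by blast
  qed
qed

text \<open>\<open>nbr_marginal\<close> and \<open>second_marginal\<close> are the quantities \<open>f\<^sub>j\<close> and \<open>y\<^sub>j\<close> of case (c),
  and \<open>nbr_weight\<close> is the unnormalised product \<open>\<Prod>\<^sub>k (1 - x\<^sub>k\<^sub>,\<^sub>w)\<close>.\<close>
definition nbr_weight ::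
  "('a set \<Rightarrow> 'a set set \<Rightarrow> ('a \<Rightarrow> nat set) \<Rightarrow> 'a \<Rightarrow> 'a list) \<Rightarrow> nat \<Rightarrow>
   'a set \<Rightarrow> 'a set set \<Rightarrow> ('a \<Rightarrow> nat set) \<Rightarrow> 'a \<Rightarrow> 'a \<Rightarrow> nat \<Rightarrow> real" where
  "nbr_weight ord n V E L v v1 w = (let us = ord (delV V v) (delE E v) L v1 in
     \<Prod>k<length us. (1 - Pf ord n (delV (delV V v) v1) (delE (delE E v) v1) (Lupd L us w k) (us ! k) w))"

definition nbr_marginal ::
  "('a set \<Rightarrow> 'a set set \<Rightarrow> ('a \<Rightarrow> nat set) \<Rightarrow> 'a \<Rightarrow> 'a list) \<Rightarrow> nat \<Rightarrow>
   'a set \<Rightarrow> 'a set set \<Rightarrow> ('a \<Rightarrow> nat set) \<Rightarrow> 'a \<Rightarrow> 'a \<Rightarrow> nat \<Rightarrow> real" where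
  "nbr_marginal ord n V E L v v1 j = (if j \<notin> L v1 then 0
     else nbr_weight ord n V E L v v1 j / (\<Sum>w\<in>L v1. nbr_weight ord n V E L v v1 w))"

definition second_marginal ::
  "('a set \<Rightarrow> 'a set set \<Rightarrow> ('a \<Rightarrow> nat set) \<Rightarrow> 'a \<Rightarrow> 'a list) \<Rightarrow> nat \<Rightarrow>
   'a set \<Rightarrow> 'a set set \<Rightarrow> ('a \<Rightarrow> nat set) \<Rightarrow> 'a \<Rightarrow> 'a \<Rightarrow> 'a \<Rightarrow> nat \<Rightarrow> real" where
  "second_marginal ord n V E L v v1 v2 j = Pf ord n (delV V v) (delE E v) (Lupd L [v1, v2] j 1) v2 j"

lemma Pf_deg2:
  assumes vo: "valid_ord ord" and R: "reachable V E L v" and d: "deg E v = 2" and i: "i \<in> colors"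
  obtains v1 v2 where "nbrs E v = {v1, v2}" "v1 \<noteq> v2"
    "Pf ord (Suc n) V E L v i = weighted_ratio colors
       (nbr_marginal ord n V E L v v1) (second_marginal ord n V E L v v1 v2) i"
proof -
  have sg: "simple_graph V E" using R by (simp add: reachable_def)
  have Lv: "L v = colors" using R d by (intro eq_colors_if_card) (auto simp: reachable_def)
  let ?a = "ord V E L v ! 0" and ?b = "ord V E L v ! 1"
  have ab: "nbrs E v = {?a, ?b}" "?a \<noteq> ?b" using ord_pair[OF vo sg d] by auto
  have c: "(i \<notin> L v) = False" "(deg E v = 0) = False" "(deg E v = 1) = False" "(deg E v = 2) = True"
    using d i Lv by auto
  show ?thesis
  proof (cases "ok_order E L i ?a ?b")
    case True
    then have "Pf ord (Suc n) V E L v i = weighted_ratio (L v)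
       (nbr_marginal ord n V E L v ?a) (second_marginal ord n V E L v ?a ?b) i"
      by (simp only: Pf.simps(2) c if_True if_False weighted_ratio_def nbr_marginal_def
          second_marginal_def nbr_weight_def Let_def)
    with ab Lv show ?thesis by (intro that) simp_all
  next
    case False
    then have "Pf ord (Suc n) V E L v i = weighted_ratio (L v)
       (nbr_marginal ord n V E L v ?b) (second_marginal ord n V E L v ?b ?a) i"
      by (simp only: Pf.simps(2) c if_True if_False weighted_ratio_def nbr_marginal_def
          second_marginal_def nbr_weight_def Let_def)
    with ab Lv show ?thesis by (intro that) (auto simp: insert_commute)
  qed
qed

section \<open>Bounds at every depth\<close>

context
  fixes ord :: "'a set \<Rightarrow> 'a set set \<Rightarrow> ('a \<Rightarrow> nat set) \<Rightarrow> 'a \<Rightarrow> 'a list" and n :: nat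
  assumes vo: "valid_ord ord"
    and range_n: "\<And>V E L v i. reachable V E L v \<Longrightarrow> 0 \<le> Pf ord n V E L v i \<and> Pf ord n V E L v i \<le> 1/2"
begin

lemma nbr_weight_bounds:
  assumes adm: "admissible V E L" and v1: "v1 \<in> nbrs E v"
  shows "(1/2) ^ (deg E v1 - 1) \<le> nbr_weight ord n V E L v v1 w \<and> nbr_weight ord n V E L v v1 w \<le> 1"
proof -
  define us where "us = ord (delV V v) (delE E v) L v1"
  have sg: "simple_graph V E" using adm by (rule admissible_simple_graph)
  have adm': "admissible (delV V v) (delE E v) L" using adm by (rule admissible_delete_vertex)
  have us: "distinct us" "set us \<subseteq> nbrs (delE E v) v1" "length us = deg (delE E v) v1"
    using valid_ordD[OF vo admissible_simple_graph[OF adm']] by (auto simp: us_def)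
  have "v \<in> nbrs E v1" "v1 \<noteq> v" using v1 nbr_in_V[OF sg v1] by (auto simp: nbrs_sym)
  then have len: "length us = deg E v1 - 1" using us(3) deg_delE[OF sg] by simp
  define x where "x k = Pf ord n (delV (delV V v) v1) (delE (delE E v) v1) (Lupd L us w k) (us ! k) w" for k
  have x: "0 \<le> x k \<and> x k \<le> 1/2" if "k < length us" for k
    unfolding x_def using range_n[OF reachable_Lupd[OF adm' us(1,2) that]] .
  have "nbr_weight ord n V E L v v1 w = (\<Prod>k<length us. 1 - x k)"
    by (simp add: nbr_weight_def us_def x_def Let_def)
  moreover have "(\<Prod>k<length us. (1/2::real)) \<le> (\<Prod>k<length us. 1 - x k)"
    using x by (intro prod_mono) auto
  moreover have "(\<Prod>k<length us. 1 - x k) \<le> 1"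
  proof (rule prod_le_1)
    fix k assume "k \<in> {..<length us}"
    then show "0 \<le> 1 - x k \<and> 1 - x k \<le> 1" using x[of k] by simp
  qed
  ultimately show ?thesis using len by simp
qed

lemma nbr_marginal_bounds:
  assumes adm: "admissible V E L" and v1: "v1 \<in> nbrs E v"
  shows "0 \<le> nbr_marginal ord n V E L v v1 j"
    and "nbr_marginal ord n V E L v v1 j \<le> 4/7"
    and "deg E v1 \<le> 2 \<Longrightarrow> nbr_marginal ord n V E L v v1 j \<le> 1/2"
    and "j \<in> L v1 \<Longrightarrow> 1/16 \<le> nbr_marginal ord n V E L v v1 j"
    and "(\<Sum>j\<in>colors. nbr_marginal ord n V E L v v1 j) = 1"
proof -
  let ?p = "nbr_weight ord n V E L v v1" and ?A = "L v1"
  have sg: "simple_graph V E" using adm by (rule admissible_simple_graph)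
  have "v1 \<in> V" "v \<in> nbrs E v1" using nbr_in_V[OF sg v1] v1 by (auto simp: nbrs_sym)
  then have d: "1 \<le> deg E v1" "deg E v1 \<le> 3" "deg E v1 + 1 \<le> card ?A" and A: "?A \<subseteq> colors"
    using deg_pos[OF sg] adm by (auto simp: admissible_def)
  have fin: "finite ?A" using A finite_subset by blast
  define a :: real where "a = (1/2) ^ (deg E v1 - 1)"
  have "(1/2::real) ^ 2 \<le> (1/2) ^ (deg E v1 - 1)" using d(2) by (intro power_decreasing) auto
  then have a: "0 < a" "1/4 \<le> a" by (simp_all add: a_def power2_eq_square)
  have p: "a \<le> ?p w \<and> ?p w \<le> 1" for w using nbr_weight_bounds[OF adm v1] by (simp add: a_def)
  have "real (deg E v1) + 1 \<le> real (card ?A)" using d(3) by linarith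
  note spread = min_weight_spread_ge[OF d(1,2) this, folded a_def]
  have "0 \<le> ?p w" for w using p[of w] a(1) by linarith
  then show "0 \<le> nbr_marginal ord n V E L v v1 j"
    by (simp add: nbr_marginal_def sum_nonneg)
  have "0 < 1 + (real (card ?A) - 1) * a" using spread(1) by linarith
  then have upper: "nbr_marginal ord n V E L v v1 j \<le> 1 / (1 + (real (card ?A) - 1) * a)"
    using normalized_weight_bounds(2)[where p = ?p and j = j, OF fin _ p a(1)] by (auto simp: nbr_marginal_def)
  show "nbr_marginal ord n V E L v v1 j \<le> 4/7"
    using upper spread(1) order_trans[OF upper, of "4/7"] by (simp add: divide_simps)
  show "deg E v1 \<le> 2 \<Longrightarrow> nbr_marginal ord n V E L v v1 j \<le> 1/2"
    using upper spread(2) order_trans[OF upper, of "1/2"] by (simp add: divide_simps)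
  show "j \<in> L v1 \<Longrightarrow> 1/16 \<le> nbr_marginal ord n V E L v v1 j"
  proof -
    assume j: "j \<in> L v1"
    have "(1/4) / 4 \<le> a / real (card ?A)"
      using a d(3) card_le_4[OF A] by (intro frac_le) auto
    moreover have "a / real (card ?A) \<le> nbr_marginal ord n V E L v v1 j"
      using normalized_weight_bounds(1)[where p = ?p, OF fin j p a(1)] j by (simp add: nbr_marginal_def)
    ultimately show ?thesis by linarith
  qed
  have "0 < (\<Sum>w\<in>?A. ?p w)" using fin d(3) p a(1) by (intro sum_pos) (auto intro: less_le_trans)
  then show "(\<Sum>j\<in>colors. nbr_marginal ord n V E L v v1 j) = 1"
    unfolding nbr_marginal_def using sum_normalized_weights[OF _ A] by simp
qed

lemma deg2_marginal_bounds:
  assumes adm: "admissible V E L" and nb: "nbrs E v = {v1, v2}" "v1 \<noteq> v2"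
  shows "\<And>j. j \<in> colors \<Longrightarrow> 0 \<le> nbr_marginal ord n V E L v v1 j \<and> nbr_marginal ord n V E L v v1 j \<le> 1"
    and "(\<Sum>j\<in>colors. nbr_marginal ord n V E L v v1 j) = 1"
    and "\<And>j. j \<in> colors \<Longrightarrow> 0 \<le> second_marginal ord n V E L v v1 v2 j \<and> second_marginal ord n V E L v v1 v2 j \<le> 1/2"
proof -
  have v1: "v1 \<in> nbrs E v" using nb by simp
  show "0 \<le> nbr_marginal ord n V E L v v1 j \<and> nbr_marginal ord n V E L v v1 j \<le> 1" for j
    using nbr_marginal_bounds(1,2)[OF adm v1, of j] by simp
  show "(\<Sum>j\<in>colors. nbr_marginal ord n V E L v v1 j) = 1"
    using nbr_marginal_bounds(5)[OF adm v1] .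
  show "0 \<le> second_marginal ord n V E L v v1 v2 j \<and> second_marginal ord n V E L v v1 v2 j \<le> 1/2" for j
    unfolding second_marginal_def using range_n[OF second_nbr_reachable[OF adm nb]] .
qed


lemma Pf_deg1_bounds:
  assumes R: "reachable V E L v" and d: "deg E v = 1" and iL: "i \<in> L v"
  shows "1/6 \<le> Pf ord (Suc n) V E L v i \<and> Pf ord (Suc n) V E L v i \<le> 1/2"
  using vo R d iL
proof (cases rule: Pf_deg1_cases[where n = n])
  case (card4 u)
  then show ?thesis using range_n[OF card4(2), of i] by simp
next
  case (card3 u j)
  have "0 \<le> Pf ord n (delV V v) (delE E v) L u i' \<and> Pf ord n (delV V v) (delE E v) L u i' \<le> 1/2"
    for i' using card3(2) by (rule range_n)
  then have "1/5 \<le> Pf ord (Suc n) V E L v i" "Pf ord (Suc n) V E L v i \<le> 1/2"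
    unfolding card3(6) by (intro deg1_ratio_bounds; auto)+
  then show ?thesis by linarith
qed

lemma Pf_deg2_bounds:
  assumes R: "reachable V E L v" and d: "deg E v = 2" and i: "i \<in> colors"
  shows "1/14 \<le> Pf ord (Suc n) V E L v i \<and> Pf ord (Suc n) V E L v i \<le> 1/2"
proof -
  have adm: "admissible V E L" using R by (simp add: reachable_iff)
  obtain v1 v2 where nb: "nbrs E v = {v1, v2}" "v1 \<noteq> v2" and
    Pf: "Pf ord (Suc n) V E L v i = weighted_ratio colors
      (nbr_marginal ord n V E L v v1) (second_marginal ord n V E L v v1 v2) i"
    using Pf_deg2[OF vo R d i] by blast
  note M = deg2_marginal_bounds[OF adm nb]
  have "nbr_marginal ord n V E L v v1 i \<le> 4/7" using nbr_marginal_bounds(2)[OF adm] nb by simp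
  then have "1/14 \<le> Pf ord (Suc n) V E L v i" unfolding Pf using i M by (intro weighted_ratio_ge) auto
  moreover have "Pf ord (Suc n) V E L v i \<le> 1/2"
    unfolding Pf using i M by (intro weighted_ratio_range[THEN conjunct2]) auto
  ultimately show ?thesis ..
qed
end

lemma Pf_range:
  assumes vo: "valid_ord ord" and "reachable V E L v"
  shows "0 \<le> Pf ord n V E L v i \<and> Pf ord n V E L v i \<le> 1/2"
  using assms(2)
proof (induction n arbitrary: V E L v i)
  case 0
  then have "2 \<le> card (L v)" by (simp add: reachable_iff)
  then show ?case by (simp add: divide_simps)
next
  case (Suc n)
  have d: "deg E v \<le> 2" "deg E v + 2 \<le> card (L v)" and Lv: "L v \<subseteq> colors"
    using Suc.prems by (auto simp: reachable_def)
  consider "i \<notin> L v" | "deg E v = 0" | "i \<in> L v" "deg E v = 1" | "i \<in> L v" "deg E v = 2"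
    using d(1) by fastforce
  then show ?case
  proof cases
    case 1
    then show ?thesis by (simp add: Pf_notin)
  next
    case 2
    with d(2) show ?thesis by (simp add: Pf_deg0 divide_simps)
  next
    case 3
    then show ?thesis using Pf_deg1_bounds[OF vo Suc.IH Suc.prems] by fastforce
  next
    case 4
    then show ?thesis using Pf_deg2_bounds[OF vo Suc.IH Suc.prems] Lv by fastforce
  qed
qed

lemma Pf_lower_bounds:
  assumes vo: "valid_ord ord" and R: "reachable V E L v" and iL: "i \<in> L v"
  shows "1/14 \<le> Pf ord n V E L v i" and "deg E v \<le> 1 \<Longrightarrow> 1/6 \<le> Pf ord n V E L v i"
proof -
  have d: "deg E v \<le> 2" "deg E v + 2 \<le> card (L v)" and Lv: "L v \<subseteq> colors"
    using R by (auto simp: reachable_def)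
  have "1/14 \<le> Pf ord n V E L v i \<and> (deg E v \<le> 1 \<longrightarrow> 1/6 \<le> Pf ord n V E L v i)"
  proof (cases n)
    case 0
    then show ?thesis using iL d(2) card_le_4[OF Lv] by (simp add: divide_simps)
  next
    case (Suc m)
    consider "deg E v = 0" | "deg E v = 1" | "deg E v = 2" using d(1) by linarith
    then show ?thesis
    proof cases
      case 1
      then show ?thesis using iL d(2) card_le_4[OF Lv] by (simp add: Pf_deg0 divide_simps)
    next
      case 2
      then show ?thesis using Pf_deg1_bounds[OF vo Pf_range[OF vo] R 2 iL, of m] Suc by simp
    next
      case 3
      then show ?thesis using Pf_deg2_bounds[OF vo Pf_range[OF vo] R 3, of i m] iL Lv Suc by auto
    qed
  qed
  then show "1/14 \<le> Pf ord n V E L v i" "deg E v \<le> 1 \<Longrightarrow> 1/6 \<le> Pf ord n V E L v i" by auto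
qed

section \<open>Degree one\<close>

lemma Pf_deg1_eq_half:
  assumes vo: "valid_ord ord" and R: "reachable V E L v" and u: "nbrs E v = {u}" "i \<notin> L u"
    and j: "j \<in> colors" "j \<noteq> i" "j \<notin> L u \<union> L v" and i: "i \<in> colors"
  shows "Pf ord (Suc n) V E L v i = 1/2"
proof -
  have sg: "simple_graph V E" using R by (simp add: reachable_def)
  have "deg E v = 1" using u(1) by (simp add: deg_def)
  then have "L v = colors - {j}"
    using R j by (intro eq_colors_minus_if_card) (auto simp: reachable_iff admissible_def)
  then show ?thesis
    using Pf_deg1_card3[where L = L, OF vo sg u(1) _ j(1) _ i] j u(2) by (simp add: Pf_notin)
qed

lemma Pf_deg1_le_6_13:
  assumes vo: "valid_ord ord" and R: "reachable V E L v" and d: "deg E v = 1" and i: "i \<in> colors"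
    and not_half: "\<not> (\<exists>u. nbrs E v = {u} \<and> i \<notin> L u \<and> (\<exists>j\<in>colors. j \<noteq> i \<and> j \<notin> L u \<union> L v))"
  shows "Pf ord (Suc n) V E L v i \<le> 6/13"
proof (cases "i \<in> L v")
  case False
  then show ?thesis by (simp add: Pf_notin)
next
  case iL: True
  from vo R d iL show ?thesis
  proof (cases rule: Pf_deg1_cases[where n = n])
    case (card4 u)
    then show ?thesis using Pf_range[OF vo card4(2), of n i] by simp
  next
    case (card3 u j)
    let ?x = "Pf ord n (delV V v) (delE E v) L u i" and ?y = "Pf ord n (delV V v) (delE E v) L u j"
    note Ru = card3(2)
    have x: "0 \<le> ?x" and y: "0 \<le> ?y" using Pf_range[OF vo Ru] by auto
    have "i \<in> L u \<or> j \<in> L u" using not_half card3 by auto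
    have "1 \<le> 13 * ?x + 6 * ?y"
    proof (cases "deg (delE E v) u \<le> 1")
      case True
      from \<open>i \<in> L u \<or> j \<in> L u\<close> show ?thesis
      proof
        assume "i \<in> L u"
        then show ?thesis using Pf_lower_bounds(2)[OF vo Ru _ True, of i n] y by linarith
      next
        assume "j \<in> L u"
        then show ?thesis using Pf_lower_bounds(2)[OF vo Ru _ True, of j n] x by linarith
      qed
    next
      case False
      then have "L u = colors"
        using Ru by (intro eq_colors_if_card) (auto simp: reachable_iff admissible_def)
      then have "1/14 \<le> ?x" "1/14 \<le> ?y" using Pf_lower_bounds(1)[OF vo Ru] i card3(4) by auto
      then show ?thesis by linarith
    qed
    then show ?thesis unfolding card3(6) using y by (simp add: divide_simps)
  qed
qed

section \<open>Degree two\<close>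

lemma triangle_vertex:
  assumes adm: "admissible V E L" and w: "v \<in> nbrs E w" "q \<in> nbrs E w" "v \<noteq> q"
    and i: "i \<notin> L w" "i \<in> colors"
  shows "nbrs E w = {v, q}" "L w = colors - {i}"
proof -
  have sg: "simple_graph V E" using adm by (rule admissible_simple_graph)
  have "w \<in> V" using nbr_in_V(2)[OF sg w(1)] .
  then have Lw: "L w \<subseteq> colors" "deg E w + 1 \<le> card (L w)" using adm by (auto simp: admissible_def)
  have "card (L w) \<le> card (colors - {i})" using Lw(1) i by (intro card_mono) auto
  then have c3: "card (L w) \<le> 3" using i(2) by simp
  have fin: "finite (nbrs E w)" using finite_nbrs[OF sg] .
  have sub: "{v, q} \<subseteq> nbrs E w" using w by auto
  have "2 \<le> deg E w" unfolding deg_def using card_mono[OF fin sub] w(3) by simp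
  with Lw c3 have "deg E w = 2" "card (L w) = 3" by linarith+
  then show "nbrs E w = {v, q}" using card_subset_eq[OF fin sub] w(3) by (simp add: deg_def)
  show "L w = colors - {i}" using Lw(1) i \<open>card (L w) = 3\<close> by (intro eq_colors_minus_if_card) auto
qed

lemma second_marginal_deg1:
  assumes vo: "valid_ord ord" and sg: "simple_graph V E" and nb: "v1 \<noteq> v2"
    and u: "nbrs (delE E v) v2 = {u}" and L2: "L v2 = colors - {i}" and i: "i \<in> colors"
    and j: "j \<in> colors" "j \<noteq> i"
  shows "second_marginal ord (Suc n) V E L v v1 v2 j =
    (1 - Pf ord n (delV (delV V v) v2) (delE (delE E v) v2) (Lupd L [v1, v2] j 1) u j) /
    (2 + Pf ord n (delV (delV V v) v2) (delE (delE E v) v2) (Lupd L [v1, v2] j 1) u i)"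
  unfolding second_marginal_def
  using Pf_deg1_card3[where L = "Lupd L [v1, v2] j 1" and v = v2, OF vo simple_graph_del[OF sg] u _ i j(2,1)]
    Lupd_pair_second[OF nb] L2 by simp

context
  fixes ord :: "'a set \<Rightarrow> 'a set set \<Rightarrow> ('a \<Rightarrow> nat set) \<Rightarrow> 'a \<Rightarrow> 'a list"
    and V :: "'a set" and E :: "'a set set" and L :: "'a \<Rightarrow> nat set" and v v1 v2 :: 'a and i :: nat
  assumes vo: "valid_ord ord" and adm: "admissible V E L"
    and nb: "nbrs E v = {v1, v2}" "v1 \<noteq> v2" and e: "{v1, v2} \<in> E"
    and i: "i \<notin> L v1" "i \<notin> L v2" "i \<in> colors"
begin

lemma triangle_structure:
  shows "L v1 = colors - {i}" "L v2 = colors - {i}"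
    and "nbrs (delE E v) v1 = {v2}" "nbrs (delE E v) v2 = {v1}"
proof -
  have sg: "simple_graph V E" using adm by (rule admissible_simple_graph)
  have "v1 \<in> nbrs E v" "v2 \<in> nbrs E v" using nb(1) by auto
  then have v: "v \<in> nbrs E v1" "v \<in> nbrs E v2" "v1 \<noteq> v" "v2 \<noteq> v"
    using nbr_in_V(3)[OF sg] by (auto simp: nbrs_sym)
  have "v2 \<in> nbrs E v1" "v1 \<in> nbrs E v2" using e by (auto simp: nbrs_def insert_commute)
  with v have "nbrs E v1 = {v, v2}" "L v1 = colors - {i}" "nbrs E v2 = {v, v1}" "L v2 = colors - {i}"
    using triangle_vertex[OF adm, of v v1 v2 i] triangle_vertex[OF adm, of v v2 v1 i] i by auto
  then show "L v1 = colors - {i}" "L v2 = colors - {i}"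
    and "nbrs (delE E v) v1 = {v2}" "nbrs (delE E v) v2 = {v1}"
    using v nb(2) by (auto simp: nbrs_delE)
qed

lemma triangle_nbr_marginal:
  assumes "j \<in> colors"
  shows "nbr_marginal ord n V E L v v1 j = (if j = i then 0 else 1/3)"
proof -
  note T = triangle_structure
  have sg: "simple_graph V E" using adm by (rule admissible_simple_graph)
  have "ord (delV V v) (delE E v) L v1 = [v2]"
    using ord_single[OF vo simple_graph_del[OF sg] T(3)] .
  moreover have "deg (delE (delE E v) v1) v2 = 0"
    using T(4) nb(2) by (simp add: deg_def nbrs_delE)
  ultimately have w: "nbr_weight ord n V E L v v1 w = 2/3" if "w \<in> colors - {i}" for w
    using that T(2) i(3) by (simp add: nbr_weight_def Pf_deg0)
  have "(\<Sum>w\<in>colors - {i}. nbr_weight ord n V E L v v1 w) = (\<Sum>w\<in>colors - {i}. 2/3)"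
    using w by (rule sum.cong[OF refl])
  also have "\<dots> = 2" using i(3) by simp
  finally have S: "(\<Sum>w\<in>colors - {i}. nbr_weight ord n V E L v v1 w) = 2" .
  show ?thesis unfolding nbr_marginal_def T(1) S using assms w by simp
qed

lemma triangle_second_marginal:
  assumes "j \<in> colors"
  shows "second_marginal ord (Suc n) V E L v v1 v2 j = (if j = i then 0 else 1/2)"
proof (cases "j = i")
  case True
  then show ?thesis
    using i(2) Lupd_pair_second[OF nb(2)] by (simp add: second_marginal_def Pf_notin)
next
  case False
  note T = triangle_structure
  have "i \<notin> Lupd L [v1, v2] j 1 v1" "j \<notin> Lupd L [v1, v2] j 1 v1"
    using i(1) by (auto simp: Lupd_def)
  with False show ?thesis
    using second_marginal_deg1[where L = L, OF vo admissible_simple_graph[OF adm] nb(2) T(4) T(2) i(3) assms False]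
    by (simp add: Pf_notin)
qed

end

lemma Pf_triangle_eq_half:
  assumes vo: "valid_ord ord" and R: "reachable V E L v"
    and nb: "nbrs E v = {u1, u2}" "u1 \<noteq> u2" and e: "{u1, u2} \<in> E"
    and i: "i \<notin> L u1" "i \<notin> L u2" "i \<in> colors"
  shows "Pf ord (Suc (Suc n)) V E L v i = 1/2"
proof -
  have adm: "admissible V E L" using R by (simp add: reachable_iff)
  have "deg E v = 2" using nb by (simp add: deg_def)
  then obtain v1 v2 where nb': "nbrs E v = {v1, v2}" "v1 \<noteq> v2" and
    Pf: "Pf ord (Suc (Suc n)) V E L v i = weighted_ratio colors
      (nbr_marginal ord (Suc n) V E L v v1) (second_marginal ord (Suc n) V E L v v1 v2) i"
    using Pf_deg2[OF vo R _ i(3)] by blast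
  from nb nb' have "{v1, v2} = {u1, u2}" by simp
  then have e': "{v1, v2} \<in> E" and i': "i \<notin> L v1" "i \<notin> L v2"
    using e i by (auto simp: doubleton_eq_iff insert_commute)
  note f = triangle_nbr_marginal[OF vo adm nb' e' i' i(3)]
  note y = triangle_second_marginal[OF vo adm nb' e' i' i(3)]
  have "(\<Sum>j\<in>colors - {i}. (1 - nbr_marginal ord (Suc n) V E L v v1 j) *
      (1 - second_marginal ord (Suc n) V E L v v1 v2 j)) = (\<Sum>j\<in>colors - {i}. 1/3)"
    using f y by (intro sum.cong) auto
  then show ?thesis
    unfolding Pf weighted_ratio_def using i(3) f y by (simp add: sum.remove)
qed

context
  fixes ord :: "'a set \<Rightarrow> 'a set set \<Rightarrow> ('a \<Rightarrow> nat set) \<Rightarrow> 'a \<Rightarrow> 'a list"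
    and V :: "'a set" and E :: "'a set set" and L :: "'a \<Rightarrow> nat set" and v v1 v2 :: 'a and i :: nat
  assumes vo: "valid_ord ord" and adm: "admissible V E L"
    and nb: "nbrs E v = {v1, v2}" "v1 \<noteq> v2" and i: "i \<notin> L v2" "i \<in> colors"
begin

lemma second_marginal_slack_leaf:
  assumes "deg (delE E v) v2 = 0"
  shows "2/13 \<le> (\<Sum>j\<in>colors - {i}. 1/2 - second_marginal ord n V E L v v1 v2 j)"
proof -
  have sg: "simple_graph V E" using adm by (rule admissible_simple_graph)
  have "v2 \<in> V" using nb nbr_in_V(1)[OF sg] by blast
  then have L2: "L v2 \<subseteq> colors - {i}" "finite (L v2)" "1 \<le> card (L v2)"
    using adm i by (auto simp: admissible_def finite_subset)
  have y: "second_marginal ord n V E L v v1 v2 j = (if j \<in> L v2 then 1 / real (card (L v2)) else 0)" for j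
    using assms Lupd_pair_second[OF nb(2)] by (simp add: second_marginal_def Pf_deg0)
  have "(\<Sum>j\<in>colors - {i}. second_marginal ord n V E L v v1 v2 j) = (\<Sum>j\<in>L v2. 1 / real (card (L v2)))"
    unfolding y using L2(1) by (intro sum.mono_neutral_cong_right) auto
  also have "\<dots> = 1" using L2(3) by simp
  finally show ?thesis using i(2) by (simp add: sum_subtractf)
qed

lemma second_marginal_slack_path:
  assumes u: "nbrs (delE E v) v2 = {u}" "u \<noteq> v1" and L2: "L v2 = colors - {i}"
  shows "2/13 \<le> (\<Sum>j\<in>colors - {i}. 1/2 - second_marginal ord (Suc n) V E L v v1 v2 j)"
proof -
  let ?V = "delV (delV V v) v2" and ?E = "delE (delE E v) v2" and ?L = "\<lambda>j. Lupd L [v1, v2] j 1"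
  define X where "X j = Pf ord n ?V ?E (?L j) u j" for j
  define Z where "Z j = Pf ord n ?V ?E (?L j) u i" for j
  have sg: "simple_graph V E" using adm by (rule admissible_simple_graph)
  have "u \<noteq> v" using u(1) by (auto simp: nbrs_def delE_def)
  then have Lu: "?L j u = L u" for j using u(2) by (simp add: Lupd_def)
  have Ru: "reachable ?V ?E (?L j) u" for j
    using second_nbr_reachable[OF adm nb] u(1) by (intro reachable_nbr) (auto simp: reachable_iff)
  then have u_adm: "deg ?E u + 2 \<le> card (L u)" "L u \<subseteq> colors"
    using Lu[of i] Ru[of i] by (auto simp: reachable_iff admissible_def)
  have y: "second_marginal ord (Suc n) V E L v v1 v2 j = (1 - X j) / (2 + Z j)" if "j \<in> colors - {i}" for j
    using that second_marginal_deg1[where L = L, OF vo sg nb(2) u(1) L2 i(2)] by (simp add: X_def Z_def)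
  have XZ: "0 \<le> X j \<and> X j \<le> 1/2 \<and> 0 \<le> Z j \<and> Z j \<le> 1/2" for j
    using Pf_range[OF vo Ru[of j]] by (simp add: X_def Z_def)
  have "2/13 \<le> (\<Sum>j\<in>colors - {i}. 1/2 - (1 - X j) / (2 + Z j))"
  proof (cases "deg ?E u \<le> 1")
    case True
    show ?thesis
    proof (rule slack_of_lower_1_6[OF i(2) u_adm(2)])
      show "2 \<le> card (L u)" using u_adm(1) by simp
      show "0 \<le> X j \<and> X j \<le> 1 \<and> 0 \<le> Z j \<and> (j \<in> L u \<longrightarrow> 1/6 \<le> X j) \<and> (i \<in> L u \<longrightarrow> 1/6 \<le> Z j)" for j
        using XZ[of j] Pf_lower_bounds(2)[OF vo Ru[of j] _ True] Lu by (auto simp: X_def Z_def)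
    qed
  next
    case False
    then have "L u = colors" using u_adm by (intro eq_colors_if_card) auto
    show ?thesis
    proof (rule slack_of_lower_1_14[OF i(2)])
      fix j assume "j \<in> colors - {i}"
      then show "1/14 \<le> X j \<and> X j \<le> 1 \<and> 1/14 \<le> Z j"
        using XZ[of j] Pf_lower_bounds(1)[OF vo Ru[of j]] Lu \<open>L u = colors\<close> i(2)
        by (auto simp: X_def Z_def)
    qed
  qed
  also have "\<dots> = (\<Sum>j\<in>colors - {i}. 1/2 - second_marginal ord (Suc n) V E L v v1 v2 j)"
    using y by (intro sum.cong) auto
  finally show ?thesis .
qed

lemma second_marginal_slack:
  assumes e: "{v1, v2} \<notin> E"
  shows "2/13 \<le> (\<Sum>j\<in>colors - {i}. 1/2 - second_marginal ord (Suc n) V E L v v1 v2 j)"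
proof -
  have sg: "simple_graph V E" using adm by (rule admissible_simple_graph)
  have v2: "v2 \<in> nbrs E v" using nb by simp
  then have "v2 \<in> V" "v2 \<noteq> v" "v \<in> nbrs E v2" using nbr_in_V[OF sg v2] by (auto simp: nbrs_sym)
  then have L2: "L v2 \<subseteq> colors" "deg E v2 + 1 \<le> card (L v2)" "1 \<le> deg E v2"
    and d': "deg (delE E v) v2 = deg E v2 - 1"
    using adm deg_pos[OF sg] deg_delE[OF sg] by (auto simp: admissible_def)
  have "card (L v2) \<le> card (colors - {i})" using L2(1) i by (intro card_mono) auto
  with i(2) L2 have "deg E v2 = 1 \<or> (deg E v2 = 2 \<and> card (L v2) = 3)" by auto
  then show ?thesis
  proof
    assume "deg E v2 = 1"
    then show ?thesis using second_marginal_slack_leaf d' by simp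
  next
    assume d: "deg E v2 = 2 \<and> card (L v2) = 3"
    then obtain u where u: "nbrs (delE E v) v2 = {u}"
      using d' deg_eq_1_iff[OF simple_graph_del[OF sg]] by fastforce
    have "u \<noteq> v1" using u e by (auto simp: nbrs_def delE_def insert_commute)
    moreover have "L v2 = colors - {i}" using L2(1) d i by (intro eq_colors_minus_if_card) auto
    ultimately show ?thesis using second_marginal_slack_path u by blast
  qed
qed

end

lemma Pf_deg2_le_13_27:
  assumes vo: "valid_ord ord" and R: "reachable V E L v" and d: "deg E v = 2" and i: "i \<in> colors"
    and not_half: "\<not> (\<exists>u1 u2. u1 \<noteq> u2 \<and> nbrs E v = {u1, u2} \<and> {u1, u2} \<in> E \<and> i \<notin> L u1 \<union> L u2)"
  shows "Pf ord (Suc (Suc n)) V E L v i \<le> 13/27"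
proof -
  have adm: "admissible V E L" using R by (simp add: reachable_iff)
  obtain v1 v2 where nb: "nbrs E v = {v1, v2}" "v1 \<noteq> v2" and
    Pf: "Pf ord (Suc (Suc n)) V E L v i = weighted_ratio colors
      (nbr_marginal ord (Suc n) V E L v v1) (second_marginal ord (Suc n) V E L v v1 v2) i"
    using Pf_deg2[OF vo R d i] by blast
  let ?f = "nbr_marginal ord (Suc n) V E L v v1" and ?y = "second_marginal ord (Suc n) V E L v v1 v2"
  have v1: "v1 \<in> nbrs E v" using nb by simp
  note M = deg2_marginal_bounds[OF vo Pf_range[OF vo] adm nb]
  show ?thesis
  proof (cases "i \<in> L v1 \<or> i \<in> L v2")
    case True
    have "1/16 \<le> ?f i \<or> 1/14 \<le> ?y i"
    proof (cases "i \<in> L v1")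
      case True
      then show ?thesis using nbr_marginal_bounds(4)[OF vo Pf_range[OF vo] adm v1] by blast
    next
      case False
      with \<open>i \<in> L v1 \<or> i \<in> L v2\<close> have "i \<in> Lupd L [v1, v2] i 1 v2"
        using Lupd_pair_second[OF nb(2)] by simp
      then have "1/14 \<le> ?y i"
        unfolding second_marginal_def by (rule Pf_lower_bounds(1)[OF vo second_nbr_reachable[OF adm nb]])
      then show ?thesis ..
    qed
    then show ?thesis unfolding Pf using i M by (intro weighted_ratio_le_13_27) auto
  next
    case False
    then have blocked: "i \<notin> L v1" "i \<notin> L v2" by auto
    with not_half nb have "{v1, v2} \<notin> E" by blast
    have "v1 \<in> V" using nbr_in_V(1)[OF admissible_simple_graph[OF adm] v1] .
    then have "deg E v1 \<le> 2" using admissible_deg_le_2[OF adm _ blocked(1) i] by blast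
    moreover have "?f i = 0" using blocked(1) by (simp add: nbr_marginal_def)
    moreover have "?y i = 0"
      unfolding second_marginal_def using blocked(2) Lupd_pair_second[OF nb(2)] by (simp add: Pf_notin)
    ultimately show ?thesis
      unfolding Pf using i M nbr_marginal_bounds(3)[OF vo Pf_range[OF vo] adm v1]
        second_marginal_slack[OF vo adm nb blocked(2) i \<open>{v1, v2} \<notin> E\<close>]
      by (intro weighted_ratio_le_13_27_slack) auto
  qed
qed

section \<open>The dichotomy\<close>

definition half_config :: "'a set set \<Rightarrow> ('a \<Rightarrow> nat set) \<Rightarrow> 'a \<Rightarrow> nat \<Rightarrow> bool" where
  "half_config E L v i \<longleftrightarrow>
     (deg E v = 0 \<and> (\<exists>j w. j \<in> colors \<and> w \<in> colors \<and> j \<noteq> w \<and> j \<noteq> i \<and> w \<noteq> i \<and> j \<notin> L v \<and> w \<notin> L v)) \<or>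
     (deg E v = 1 \<and> (\<exists>u. nbrs E v = {u} \<and> i \<notin> L u \<and> (\<exists>j\<in>colors. j \<noteq> i \<and> j \<notin> L u \<union> L v))) \<or>
     (deg E v = 2 \<and> (\<exists>u1 u2. u1 \<noteq> u2 \<and> nbrs E v = {u1, u2} \<and> {u1, u2} \<in> E \<and> i \<notin> L u1 \<union> L u2))"

lemma Pf_deg0_cases:
  assumes R: "reachable V E L v" and d: "deg E v = 0"
  shows "(half_config E L v i \<and> (\<forall>n. Pf ord n V E L v i = 1/2)) \<or> (\<forall>n. Pf ord n V E L v i \<le> 1/3)"
proof (cases "i \<in> L v \<and> card (L v) = 2")
  case True
  have "L v \<subseteq> colors" using R by (simp add: reachable_def)
  with True have "card (colors - L v) = 2" by (simp add: card_Diff_subset finite_subset)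
  then obtain j w where "colors - L v = {j, w}" "j \<noteq> w" by (meson card_2_iff)
  with True d have "half_config E L v i" unfolding half_config_def by blast
  with True d show ?thesis by (simp add: Pf_deg0)
next
  case False
  with R d have "i \<in> L v \<Longrightarrow> 3 \<le> card (L v)" by (auto simp: reachable_iff)
  with d show ?thesis by (simp add: Pf_deg0 divide_simps)
qed

lemma Pf_dichotomy:
  assumes vo: "valid_ord ord" and R: "reachable V E L v" and i: "i \<in> colors"
  shows "(half_config E L v i \<and> (\<forall>m. Pf ord (Suc (Suc m)) V E L v i = 1/2)) \<or>
    (\<forall>m. Pf ord (Suc (Suc m)) V E L v i \<le> (if deg E v \<le> 1 then 6/13 else 13/27))"
proof -
  have "deg E v \<le> 2" using R by (simp add: reachable_def)
  then consider "deg E v = 0" | "deg E v = 1" | "deg E v = 2" by linarith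
  then show ?thesis
  proof cases
    case 1
    from Pf_deg0_cases[OF R 1, of i ord] show ?thesis
    proof
      assume third: "\<forall>n. Pf ord n V E L v i \<le> 1/3"
      have "Pf ord (Suc (Suc m)) V E L v i \<le> 6/13" for m
        using third[rule_format, of "Suc (Suc m)"] by linarith
      then show ?thesis using 1 by simp
    qed blast
  next
    case 2
    show ?thesis
    proof (cases "\<exists>u. nbrs E v = {u} \<and> i \<notin> L u \<and> (\<exists>j\<in>colors. j \<noteq> i \<and> j \<notin> L u \<union> L v)")
      case True
      then have "Pf ord (Suc (Suc m)) V E L v i = 1/2" for m using Pf_deg1_eq_half[OF vo R _ _ _ _ _ i] by blast
      then show ?thesis using True 2 by (simp add: half_config_def)
    next
      case False
      then have "Pf ord (Suc (Suc m)) V E L v i \<le> 6/13" for m by (rule Pf_deg1_le_6_13[OF vo R 2 i])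
      then show ?thesis using 2 by simp
    qed
  next
    case 3
    show ?thesis
    proof (cases "\<exists>u1 u2. u1 \<noteq> u2 \<and> nbrs E v = {u1, u2} \<and> {u1, u2} \<in> E \<and> i \<notin> L u1 \<union> L u2")
      case True
      then have "Pf ord (Suc (Suc m)) V E L v i = 1/2" for m using Pf_triangle_eq_half[OF vo R _ _ _ _ _ i] by blast
      then show ?thesis using True 3 by (simp add: half_config_def)
    next
      case False
      then have "Pf ord (Suc (Suc m)) V E L v i \<le> 13/27" for m by (rule Pf_deg2_le_13_27[OF vo R 3 i])
      then show ?thesis using 3 by simp
    qed
  qed
qed

theorem theorem11:
  fixes ord :: "'a set \<Rightarrow> 'a set set \<Rightarrow> ('a \<Rightarrow> nat set) \<Rightarrow> 'a \<Rightarrow> 'a list"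
    and V :: "'a set" and E :: "'a set set" and L :: "'a \<Rightarrow> nat set" and v :: 'a and i :: nat
  assumes "valid_ord ord"
    and "reachable V E L v"
    and "i \<in> colors"
  shows "((\<forall>D::int. D \<ge> 2 \<longrightarrow> P ord V E L v i D = 1/2) \<or>
          ((\<forall>D::int. D \<ge> 2 \<longrightarrow> P ord V E L v i D \<le> 13/27) \<and>
           (deg E v \<le> 1 \<longrightarrow> (\<forall>D::int. D \<ge> 2 \<longrightarrow> P ord V E L v i D \<le> 6/13)))) \<and>
         ((\<exists>D::int. D \<ge> 2 \<and> P ord V E L v i D = 1/2) \<longrightarrow>
          (deg E v = 0 \<and> (\<exists>j w. j \<in> colors \<and> w \<in> colors \<and> j \<noteq> w \<and> j \<noteq> i \<and> w \<noteq> i \<and>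
                              j \<notin> L v \<and> w \<notin> L v)) \<or>
          (deg E v = 1 \<and> (\<exists>u. nbrs E v = {u} \<and> i \<notin> L u \<and>
                              (\<exists>j\<in>colors. j \<noteq> i \<and> j \<notin> L u \<union> L v))) \<or>
          (deg E v = 2 \<and> (\<exists>u1 u2. u1 \<noteq> u2 \<and> nbrs E v = {u1, u2} \<and> {u1, u2} \<in> E \<and>
                              i \<notin> L u1 \<union> L u2)))"
proof -
  define p where "p m = Pf ord (Suc (Suc m)) V E L v i" for m
  have P_fuel: "P ord V E L v i D = p (nat D - 2)" if "2 \<le> D" for D
  proof -
    from that have "nat D = Suc (Suc (nat D - 2))" by simp
    then show ?thesis unfolding P_def p_def by (rule arg_cong)
  qed
  from Pf_dichotomy[OF assms, folded p_def] show ?thesis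
  proof
    assume "half_config E L v i \<and> (\<forall>m. p m = 1/2)"
    then show ?thesis using P_fuel unfolding half_config_def by simp
  next
    assume "\<forall>m. p m \<le> (if deg E v \<le> 1 then 6/13 else 13/27)"
    then have "P ord V E L v i D \<le> (if deg E v \<le> 1 then 6/13 else 13/27)" if "2 \<le> D" for D
      using P_fuel[OF that] by simp
    then have "P ord V E L v i D \<le> 13/27 \<and> (deg E v \<le> 1 \<longrightarrow> P ord V E L v i D \<le> 6/13)"
      if "2 \<le> D" for D
      using that by (fastforce split: if_splits)
    then show ?thesis by force
  qed
qed

end
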